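(* Let $K\in\mathbb{R}^{m\times n}$ and let $Q=\begin{bmatrix}Q_{11}&Q_{12}\\Q_{12}^\top&Q_{22}\end{bmatrix}\in\mathbb{R}^{(n+m)\times(n+m)}$ be symmetric with $Q_{11}\in\mathbb{R}^{n\times n}$. Define $$Y(x)=\begin{bmatrix}x\\ \mathrm{dz}(Kx)\end{bmatrix}^\top Q\begin{bmatrix}x\\ \mathrm{dz}(Kx)\end{bmatrix},\qquad x\in\mathbb{R}^n,$$ and, for a diagonal $T_0\in\mathbb{R}^{m\times m}$ and a symmetric $R\in\mathbb{R}^{m\times m}$, $$\Sigma_0=\begin{bmatrix}0&K^\top T_0\\ T_0K&-2T_0\end{bmatrix},\qquad \Sigma_R=\begin{bmatrix}K^\top RK&-K^\top R\\ -RK&R\end{bmatrix}.$$ Then: (i) If there exist a diagonal $T_0\succeq 0$ and a symmetric $R\succeq 0$ with $Q-\Sigma_0-\Sigma_R\succeq 0$, then $Y$ is positive semi-definite. (ii) If there exist a diagonal $T_0\succeq0$ and a symmetric $R\succ 0$ with $Q-\Sigma_0-\Sigma_R\succeq 0$, then $Y$ is positive semi-definite and $Y(x)\ge \lambda_{\min}(R)\,|\mathrm{sat}(Kx)|^2$ for all $x\in\mathbb{R}^n$. (iii) If there exists a symmetric $R\succ0$ with $Q_{11}\succ 0$ and $Q-\Sigma_R\succeq 0$, then $Y$ is positive definite (but not necessarily radially unbounded). (iv) If there exists a diagonal $T_0\succ 0$ with $Q_{11}\succ0$ and $Q-\Sigma_0\succeq 0$, then $Y$ is positive definite and radially unbo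unded.
   Context: The saturation $\mathrm{sat}:\mathbb{R}^m\to\mathbb{R}^m$ is decentralized: $\mathrm{sat}(u)_i=\min\{\overline{u}_i,\max\{-\underline{u}_i,u_i\}\}$ for given limits $\overline{u}_i>0$, $\underline{u}_i>0$ (possibly non-symmetric). The deadzone is $\mathrm{dz}(u)=u-\mathrm{sat}(u)$. $\succ0$/$\succeq0$ denote positive definite/semi-definite; $\lambda_{\min}(R)$ is the smallest eigenvalue of $R$. *)

theory Defs
  imports "HOL-Analysis.Analysis"
begin

text \<open>Decentralized saturation with (possibly non-symmetric) limits: the upper limit of
  component i is ub i, the lower limit is -lb i; positivity of the limits is assumed in the
  theorem.\<close>
definition sat :: "real^'m \<Rightarrow> real^'m \<Rightarrow> real^'m \<Rightarrow> real^'m" where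
  "sat ub lb u = (\<chi> i. min (ub $ i) (max (- (lb $ i)) (u $ i)))"

definition dz :: "real^'m \<Rightarrow> real^'m \<Rightarrow> real^'m \<Rightarrow> real^'m" where
  "dz ub lb u = u - sat ub lb u"

definition stack :: "real^'n \<Rightarrow> real^'m \<Rightarrow> real^('n::finite + 'm::finite)" where
  "stack x w = (\<chi> i. case i of Inl a \<Rightarrow> x $ a | Inr b \<Rightarrow> w $ b)"

definition block_mat ::
  "real^'n^'n \<Rightarrow> real^'m^'n \<Rightarrow> real^'n^'m \<Rightarrow> real^'m^'m \<Rightarrow> real^('n::finite + 'm::finite)^('n + 'm)" where
  "block_mat A B C D = (\<chi> i j. case i of
       Inl a \<Rightarrow> (case j of Inl b \<Rightarrow> A $ a $ b | Inr b \<Rightarrow> B $ a $ b)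
     | Inr a \<Rightarrow> (case j of Inl b \<Rightarrow> C $ a $ b | Inr b \<Rightarrow> D $ a $ b))"

definition blk11 :: "real^('n::finite + 'm::finite)^('n + 'm) \<Rightarrow> real^'n^'n" where
  "blk11 Q = (\<chi> a b. Q $ Inl a $ Inl b)"

definition symmetric_mat :: "real^'n^'n \<Rightarrow> bool" where
  "symmetric_mat M \<longleftrightarrow> transpose M = M"

definition psd_mat :: "real^'n^'n \<Rightarrow> bool" where
  "psd_mat M \<longleftrightarrow> (\<forall>v. v \<bullet> (M *v v) \<ge> 0)"

definition pd_mat :: "real^'n^'n \<Rightarrow> bool" where
  "pd_mat M \<longleftrightarrow> (\<forall>v. v \<noteq> 0 \<longrightarrow> v \<bullet> (M *v v) > 0)"

definition diagonal_mat :: "real^'n^'n \<Rightarrow> bool" where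
  "diagonal_mat M \<longleftrightarrow> (\<forall>i j. i \<noteq> j \<longrightarrow> M $ i $ j = 0)"

text \<open>Smallest (real) eigenvalue; used only for symmetric matrices, whose eigenvalues are all real.\<close>
definition lambda_min :: "real^'n^'n \<Rightarrow> real" where
  "lambda_min M = Min {c. \<exists>v. v \<noteq> 0 \<and> M *v v = c *s v}"

definition psd_fun :: "(real^'n \<Rightarrow> real) \<Rightarrow> bool" where
  "psd_fun Y \<longleftrightarrow> Y 0 = 0 \<and> (\<forall>x. Y x \<ge> 0)"

definition pd_fun :: "(real^'n \<Rightarrow> real) \<Rightarrow> bool" where
  "pd_fun Y \<longleftrightarrow> Y 0 = 0 \<and> (\<forall>x. x \<noteq> 0 \<longrightarrow> Y x > 0)"

definition radially_unbounded :: "(real^'n \<Rightarrow> real) \<Rightarrow> bool" where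
  "radially_unbounded Y \<longleftrightarrow> filterlim Y at_top at_infinity"

definition Sigma0 :: "real^'n^'m \<Rightarrow> real^'m^'m \<Rightarrow> real^('n::finite + 'm::finite)^('n + 'm)" where
  "Sigma0 K T0 = block_mat 0 (transpose K ** T0) (T0 ** K) (- 2 *\<^sub>R T0)"

definition SigmaR :: "real^'n^'m \<Rightarrow> real^'m^'m \<Rightarrow> real^('n::finite + 'm::finite)^('n + 'm)" where
  "SigmaR K R = block_mat (transpose K ** R ** K) (- (transpose K ** R)) (- (R ** K)) R"

end

theory Submission
  imports Defs
begin

(* Write w = dz(Kx) and s = sat(Kx) = Kx - w, so that Y(x) = z'Qz for z = [x; w].
   The form of Sigma_R at z is s'Rs, and the form of Sigma_0 at z is 2 w'T0 s, which
   the sector condition of the deadzone bounds below by 2 sum_i T0_ii min(ub_i, lb_i) |w_i|.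
   Splitting Q = (Q - Sigma_0 - Sigma_R) + Sigma_0 + Sigma_R therefore gives
     Y(x) >= 2 sum_i T0_ii min(ub_i, lb_i) |w_i| + s'Rs,
   from which (i) and (ii) follow at once, (iii) is the case T0 = 0 and (iv) the case R = 0.
   Positive definiteness comes from Q11 when w = 0; radial unboundedness in (iv) comes from
   combining Y(x) >= c |w| with Y(x) >= alpha |x|^2 - C (2 |x| |w| + |w|^2). *)

section \<open>Stacked vectors and block matrices\<close>

lemma inner_stack: "stack x w \<bullet> stack y v = x \<bullet> y + w \<bullet> v"
  by (simp add: inner_vec_def stack_def sum.Plus UNIV_Plus_UNIV[symmetric] del: UNIV_Plus_UNIV)

lemma stack_zero [simp]: "stack 0 0 = 0"
  by (simp add: stack_def vec_eq_iff split: sum.split)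

lemma block_mat_mult_stack:
  "block_mat A B C D *v stack x w = stack (A *v x + B *v w) (C *v x + D *v w)"
  by (simp add: vec_eq_iff matrix_vector_mult_def block_mat_def stack_def sum.Plus
      UNIV_Plus_UNIV[symmetric] del: UNIV_Plus_UNIV split: sum.split)

lemma quadratic_form_block_mat:
  "stack x w \<bullet> (block_mat A B C D *v stack x w)
     = x \<bullet> (A *v x) + x \<bullet> (B *v w) + w \<bullet> (C *v x) + w \<bullet> (D *v w)"
  by (simp add: block_mat_mult_stack inner_stack inner_add_right)

lemma block_mat_zero [simp]: "block_mat 0 0 0 0 = 0"
  by (simp add: block_mat_def vec_eq_iff split: sum.split)

definition blk12 :: "real^('n::finite + 'm::finite)^('n + 'm) \<Rightarrow> real^'m^'n" where
  "blk12 Q = (\<chi> a b. Q $ Inl a $ Inr b)"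

definition blk21 :: "real^('n::finite + 'm::finite)^('n + 'm) \<Rightarrow> real^'n^'m" where
  "blk21 Q = (\<chi> a b. Q $ Inr a $ Inl b)"

definition blk22 :: "real^('n::finite + 'm::finite)^('n + 'm) \<Rightarrow> real^'m^'m" where
  "blk22 Q = (\<chi> a b. Q $ Inr a $ Inr b)"

lemma block_mat_blocks: "block_mat (blk11 Q) (blk12 Q) (blk21 Q) (blk22 Q) = Q"
  by (simp add: vec_eq_iff block_mat_def blk11_def blk12_def blk21_def blk22_def split: sum.split)

lemma quadratic_form_stack:
  "stack x w \<bullet> (Q *v stack x w)
     = x \<bullet> (blk11 Q *v x) + x \<bullet> (blk12 Q *v w) + w \<bullet> (blk21 Q *v x) + w \<bullet> (blk22 Q *v w)"
  by (metis block_mat_blocks quadratic_form_block_mat)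

lemma inner_transpose_mult: "x \<bullet> (transpose K *v v) = (K *v x) \<bullet> (v :: real^'a)"
  by (metis dot_lmul_matrix inner_commute transpose_matrix_vector)

lemma inner_mult_symmetric:
  "symmetric_mat R \<Longrightarrow> x \<bullet> (R *v v) = v \<bullet> (R *v (x :: real^'a))"
  by (metis inner_commute inner_transpose_mult symmetric_mat_def)

lemma matrix_vector_mult_uminus_left: "(- A) *v v = - (A *v (v :: real^'a))"
  by (simp add: vec_eq_iff matrix_vector_mult_def sum_negf)

lemma quadratic_form_SigmaR:
  "stack x w \<bullet> (SigmaR K R *v stack x w) = (K *v x - w) \<bullet> (R *v (K *v x - w))"
  by (simp add: SigmaR_def quadratic_form_block_mat matrix_vector_mul_assoc[symmetric]
      inner_transpose_mult matrix_vector_mult_diff_distrib inner_diff_left inner_diff_right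
      matrix_vector_mult_uminus_left del: transpose_matrix_vector)

lemma quadratic_form_Sigma0:
  assumes "symmetric_mat T0"
  shows "stack x w \<bullet> (Sigma0 K T0 *v stack x w) = 2 * (w \<bullet> (T0 *v (K *v x - w)))"
  using inner_mult_symmetric[OF assms, of "K *v x" w]
  by (simp add: Sigma0_def quadratic_form_block_mat matrix_vector_mul_assoc[symmetric]
      inner_transpose_mult scaleR_matrix_vector_assoc[symmetric] matrix_vector_mult_diff_distrib
      inner_diff_right matrix_vector_mult_uminus_left del: transpose_matrix_vector)

lemma Sigma0_zero [simp]: "Sigma0 K 0 = 0"
  by (simp add: Sigma0_def)

lemma SigmaR_zero [simp]: "SigmaR K 0 = 0"
  by (simp add: SigmaR_def)

section \<open>Quadratic forms and the least eigenvalue\<close>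

lemma quadratic_form_axis: "axis i 1 \<bullet> (T *v axis i 1) = T $ i $ i"
  for T :: "real^'a^'a"
proof -
  have "axis i 1 \<bullet> (T *v axis i 1) = T $ i \<bullet> axis i 1"
    by (simp add: inner_axis' matrix_vector_mul_component)
  also have "\<dots> = T $ i $ i"
    by (rule cart_eq_inner_axis[symmetric])
  finally show ?thesis .
qed

lemma psd_mat_diag_nonneg: "psd_mat T \<Longrightarrow> 0 \<le> T $ i $ i"
  by (metis psd_mat_def quadratic_form_axis)

lemma pd_mat_diag_pos: "pd_mat T \<Longrightarrow> 0 < T $ i $ i"
  unfolding pd_mat_def by (metis axis_nth one_neq_zero quadratic_form_axis zero_index)

lemma pd_mat_imp_psd_mat: "pd_mat T \<Longrightarrow> psd_mat T"
  unfolding pd_mat_def psd_mat_def by (metis inner_zero_left order.refl less_imp_le)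

lemma inner_diagonal_mat:
  assumes "diagonal_mat T"
  shows "w \<bullet> (T *v s) = (\<Sum>i\<in>UNIV. T $ i $ i * w $ i * s $ i)"
proof -
  have "(T *v s) $ i = T $ i $ i * s $ i" for i
    using assms unfolding diagonal_mat_def matrix_vector_mult_def
    by (simp add: sum.remove[of UNIV i] sum.neutral)
  then show ?thesis by (simp add: inner_vec_def mult_ac)
qed

lemma symmetric_mat_diagonal:
  assumes "diagonal_mat T"
  shows "symmetric_mat T"
proof -
  have "T $ j $ i = T $ i $ j" for i j
    using assms by (cases "i = j") (auto simp: diagonal_mat_def)
  then show ?thesis by (simp add: symmetric_mat_def transpose_def vec_eq_iff)
qed

lemma quadratic_form_scaleR:
  "(c *\<^sub>R x) \<bullet> (A *v (c *\<^sub>R x)) = c\<^sup>2 * (x \<bullet> (A *v (x :: real^'a)))"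
  by (simp add: matrix_vector_mult_scaleR power2_eq_square)

lemma quadratic_form_attains_min_on_sphere:
  fixes A :: "real^'a^'a"
  obtains v where "norm v = 1" "\<And>x. (v \<bullet> (A *v v)) * (norm x)\<^sup>2 \<le> x \<bullet> (A *v x)"
proof -
  have "continuous_on (sphere 0 1) (\<lambda>v. v \<bullet> (A *v v))"
    by (intro continuous_intros)
  moreover have "sphere (0 :: real^'a) 1 \<noteq> {}"
    by simp
  ultimately obtain v where v: "v \<in> sphere 0 1"
    "\<And>y. y \<in> sphere 0 1 \<Longrightarrow> v \<bullet> (A *v v) \<le> y \<bullet> (A *v y)"
    using continuous_attains_inf[OF compact_sphere] by blast
  have "(v \<bullet> (A *v v)) * (norm x)\<^sup>2 \<le> x \<bullet> (A *v x)" for x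
  proof (cases "x = 0")
    case False
    have "v \<bullet> (A *v v) \<le> (x /\<^sub>R norm x) \<bullet> (A *v (x /\<^sub>R norm x))"
      using False by (intro v(2)) simp
    also have "\<dots> = (x \<bullet> (A *v x)) / (norm x)\<^sup>2"
      by (simp only: quadratic_form_scaleR) (simp add: power_divide field_simps)
    finally show ?thesis
      using False by (simp add: pos_le_divide_eq)
  qed simp
  with v(1) show thesis by (intro that) simp
qed

lemma pd_mat_coercive:
  assumes "pd_mat A"
  obtains \<alpha> where "\<alpha> > 0" "\<And>x. \<alpha> * (norm x)\<^sup>2 \<le> x \<bullet> (A *v (x :: real^'a))"
proof -
  obtain v where "norm v = 1" and v_min: "\<And>x. (v \<bullet> (A *v v)) * (norm x)\<^sup>2 \<le> x \<bullet> (A *v x)"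
    using quadratic_form_attains_min_on_sphere[of A] by blast
  then have "v \<noteq> 0" by auto
  then have "v \<bullet> (A *v v) > 0"
    using assms unfolding pd_mat_def by blast
  then show thesis using v_min by (rule that)
qed

lemma bilinear_form_bound:
  fixes A :: "real^'b^'a"
  obtains C where "0 \<le> C" "\<And>x y. \<bar>x \<bullet> (A *v y)\<bar> \<le> C * norm x * norm y"
proof -
  have "bounded_bilinear (\<lambda>x y. x \<bullet> (A *v y))"
    using bounded_bilinear.comp[OF bounded_bilinear_inner bounded_linear_ident
        matrix_vector_mul_bounded_linear[of A]] by simp
  then obtain C where "0 \<le> C" "\<And>x y. norm (x \<bullet> (A *v y)) \<le> norm x * norm y * C"
    using bounded_bilinear.nonneg_bounded by blast
  then show thesis
    by (intro that[of C]) (auto simp: mult_ac)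
qed

lemma quadratic_form_stack_lower_bound:
  fixes Q :: "real^('n::finite + 'm::finite)^('n + 'm)"
  assumes "pd_mat (blk11 Q)"
  obtains \<alpha> C where "0 < \<alpha>" "0 \<le> C"
    "\<And>x w. \<alpha> * (norm x)\<^sup>2 - C * (2 * norm x * norm w + (norm w)\<^sup>2)
       \<le> stack x w \<bullet> (Q *v stack x w)"
proof -
  obtain \<alpha> where "0 < \<alpha>" and coercive: "\<And>x. \<alpha> * (norm x)\<^sup>2 \<le> x \<bullet> (blk11 Q *v x)"
    using pd_mat_coercive[OF assms] by blast
  obtain C12 where "0 \<le> C12" and C12: "\<And>x y. \<bar>x \<bullet> (blk12 Q *v y)\<bar> \<le> C12 * norm x * norm y"
    using bilinear_form_bound[of "blk12 Q"] by blast
  obtain C21 where "0 \<le> C21" and C21: "\<And>x y. \<bar>x \<bullet> (blk21 Q *v y)\<bar> \<le> C21 * norm x * norm y"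
    using bilinear_form_bound[of "blk21 Q"] by blast
  obtain C22 where "0 \<le> C22" and C22: "\<And>x y. \<bar>x \<bullet> (blk22 Q *v y)\<bar> \<le> C22 * norm x * norm y"
    using bilinear_form_bound[of "blk22 Q"] by blast
  define C where "C = C12 + C21 + C22"
  have C_ge: "C12 * p \<le> C * p" "C21 * p \<le> C * p" "C22 * p \<le> C * p" if "0 \<le> p" for p
    using that \<open>0 \<le> C12\<close> \<open>0 \<le> C21\<close> \<open>0 \<le> C22\<close> by (simp_all add: C_def mult_right_mono)
  have "\<alpha> * (norm x)\<^sup>2 - C * (2 * norm x * norm w + (norm w)\<^sup>2)
          \<le> stack x w \<bullet> (Q *v stack x w)" for x w
  proof -
    have "\<bar>x \<bullet> (blk12 Q *v w)\<bar> \<le> C * (norm x * norm w)"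
      using C12[of x w] C_ge(1)[of "norm x * norm w"] by (simp add: mult.assoc)
    moreover have "\<bar>w \<bullet> (blk21 Q *v x)\<bar> \<le> C * (norm x * norm w)"
      using C21[of w x] C_ge(2)[of "norm x * norm w"] by (simp add: mult_ac)
    moreover have "\<bar>w \<bullet> (blk22 Q *v w)\<bar> \<le> C * (norm w)\<^sup>2"
      using C22[of w w] C_ge(3)[of "(norm w)\<^sup>2"] by (simp add: mult.assoc power2_eq_square)
    ultimately show ?thesis
      using coercive[of x] unfolding quadratic_form_stack by (simp add: algebra_simps abs_le_iff)
  qed
  with \<open>0 < \<alpha>\<close> show thesis
    using \<open>0 \<le> C12\<close> \<open>0 \<le> C21\<close> \<open>0 \<le> C22\<close> by (intro that[of \<alpha> C]) (simp_all add: C_def)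
qed

lemma nonneg_quadratic_imp_linear_coeff_zero:
  fixes a b :: real
  assumes "\<And>t. 0 \<le> 2 * t * a + t\<^sup>2 * b"
  shows "a = 0"
proof -
  define c where "c = \<bar>b\<bar> + 1"
  define t where "t = - a / c"
  have "c > 0" "b \<le> c" by (simp_all add: c_def)
  have "0 \<le> 2 * t * a + t\<^sup>2 * c"
    using assms[of t] mult_left_mono[OF \<open>b \<le> c\<close> zero_le_power2[of t]] by linarith
  also have "\<dots> = - (a\<^sup>2 / c)"
    using \<open>c > 0\<close> by (simp add: t_def field_simps power2_eq_square)
  finally have "a\<^sup>2 \<le> 0"
    using \<open>c > 0\<close> by (simp add: divide_le_0_iff)
  then show ?thesis by simp
qed

lemma psd_mat_quadratic_form_eq_zeroD:
  assumes "symmetric_mat M" "psd_mat M" "v \<bullet> (M *v v) = 0"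
  shows "M *v v = 0"
proof -
  have "0 \<le> 2 * t * ((M *v v) \<bullet> (M *v v)) + t\<^sup>2 * ((M *v v) \<bullet> (M *v (M *v v)))" for t
  proof -
    have "0 \<le> (v + t *\<^sub>R (M *v v)) \<bullet> (M *v (v + t *\<^sub>R (M *v v)))"
      using assms(2) unfolding psd_mat_def by blast
    also have "\<dots> = 2 * t * ((M *v v) \<bullet> (M *v v)) + t\<^sup>2 * ((M *v v) \<bullet> (M *v (M *v v)))"
      using assms(3) inner_mult_symmetric[OF assms(1), of v "M *v v"]
      by (simp add: power2_eq_square algebra_simps)
    finally show ?thesis .
  qed
  then have "(M *v v) \<bullet> (M *v v) = 0"
    by (rule nonneg_quadratic_imp_linear_coeff_zero)
  then show ?thesis by simp
qed

(* Needed because lambda_min is a Min, which carries no information on infinite sets. *)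
lemma finite_eigenvalues_symmetric_mat:
  fixes R :: "real^'a^'a"
  assumes "symmetric_mat R"
  shows "finite {c. \<exists>v. v \<noteq> 0 \<and> R *v v = c *s v}"
proof -
  define E where "E = {c. \<exists>v. v \<noteq> 0 \<and> R *v v = c *s v}"
  obtain ev where ev: "\<And>c. c \<in> E \<Longrightarrow> ev c \<noteq> 0 \<and> R *v ev c = c *s ev c"
    using bchoice[of E "\<lambda>c v. v \<noteq> 0 \<and> R *v v = c *s v"] unfolding E_def by blast
  have orth: "ev c \<bullet> ev d = 0" if "c \<in> E" "d \<in> E" "c \<noteq> d" for c d
  proof -
    have "c * (ev c \<bullet> ev d) = ev d \<bullet> (R *v ev c)"
      using ev[OF that(1)] by (simp add: scalar_mult_eq_scaleR inner_commute)
    also have "\<dots> = ev c \<bullet> (R *v ev d)"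
      by (rule inner_mult_symmetric[OF assms])
    also have "\<dots> = d * (ev c \<bullet> ev d)"
      using ev[OF that(2)] by (simp add: scalar_mult_eq_scaleR)
    finally show ?thesis using that(3) by simp
  qed
  have "inj_on ev E"
  proof (rule inj_onI)
    fix c d assume "c \<in> E" "d \<in> E" "ev c = ev d"
    then show "c = d" using orth[of c d] ev[of c] by force
  qed
  moreover have "independent (ev ` E)"
  proof (rule pairwise_orthogonal_independent)
    show "pairwise orthogonal (ev ` E)"
      using orth unfolding pairwise_def orthogonal_def by blast
    show "0 \<notin> ev ` E"
      using ev by force
  qed
  ultimately show ?thesis
    unfolding E_def[symmetric] using finiteI_independent finite_imageD by blast
qed

(* The minimiser v of the form on the unit sphere is an eigenvector: R - (v'Rv) I is
   positive semi-definite and vanishes in the direction v. *)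
lemma lambda_min_le_quadratic_form:
  fixes R :: "real^'a^'a"
  assumes "symmetric_mat R"
  shows "lambda_min R * (norm s)\<^sup>2 \<le> s \<bullet> (R *v s)"
proof -
  define E where "E = {c. \<exists>v. v \<noteq> 0 \<and> R *v v = c *s v}"
  obtain v where "norm v = 1" and v_min: "\<And>x. (v \<bullet> (R *v v)) * (norm x)\<^sup>2 \<le> x \<bullet> (R *v x)"
    using quadratic_form_attains_min_on_sphere[of R] by blast
  define \<mu> where "\<mu> = v \<bullet> (R *v v)"
  define M where "M = R - \<mu> *\<^sub>R mat 1"
  have M_apply: "M *v x = R *v x - \<mu> *\<^sub>R x" for x
    by (simp add: M_def matrix_vector_mult_diff_rdistrib scaleR_matrix_vector_assoc[symmetric])
  have "symmetric_mat M"
    using assms by (simp add: M_def symmetric_mat_def transpose_def vec_eq_iff mat_def)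
  moreover have "psd_mat M"
    using v_min by (simp add: psd_mat_def M_apply inner_diff_right \<mu>_def power2_norm_eq_inner)
  moreover have "v \<bullet> (M *v v) = 0"
    using \<open>norm v = 1\<close> by (simp add: M_apply inner_diff_right \<mu>_def flip: power2_norm_eq_inner)
  ultimately have "M *v v = 0"
    by (rule psd_mat_quadratic_form_eq_zeroD)
  moreover have "v \<noteq> 0"
    using \<open>norm v = 1\<close> by auto
  ultimately have "\<mu> \<in> E"
    unfolding E_def by (auto simp: M_apply scalar_mult_eq_scaleR)
  moreover have "\<mu> \<le> c" if c_eigen: "c \<in> E" for c
  proof -
    obtain w where "w \<noteq> 0" and w_eigen: "R *v w = c *s w"
      using c_eigen unfolding E_def by blast
    have "\<mu> * (norm w)\<^sup>2 \<le> w \<bullet> (R *v w)"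
      unfolding \<mu>_def by (rule v_min)
    also have "\<dots> = c * (norm w)\<^sup>2"
      by (simp add: w_eigen scalar_mult_eq_scaleR power2_norm_eq_inner)
    finally show ?thesis
      using \<open>w \<noteq> 0\<close> by simp
  qed
  ultimately have "lambda_min R = \<mu>"
    unfolding lambda_min_def E_def[symmetric]
    using finite_eigenvalues_symmetric_mat[OF assms, folded E_def] by (intro Min_eqI) auto
  then show ?thesis
    using v_min[of s] by (simp add: \<mu>_def)
qed

section \<open>The deadzone sector condition\<close>

lemma dz_zero:
  assumes "\<forall>i. 0 < ub $ i" "\<forall>i. 0 < lb $ i"
  shows "dz ub lb 0 = 0"
proof -
  have "dz ub lb 0 $ i = 0" for i
    using assms[THEN spec, of i] by (simp add: dz_def sat_def min_def max_def)
  then show ?thesis by (simp add: vec_eq_iff)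
qed

lemma sat_eq_zeroD:
  assumes "\<forall>i. 0 < ub $ i" "\<forall>i. 0 < lb $ i" "sat ub lb u = 0"
  shows "u = 0"
proof -
  have "u $ i = 0" for i
  proof -
    have "min (ub $ i) (max (- lb $ i) (u $ i)) = 0"
      using assms(3) by (simp add: sat_def vec_eq_iff)
    then show ?thesis
      using assms(1,2)[THEN spec, of i] by (auto simp: min_def max_def split: if_splits)
  qed
  then show ?thesis by (simp add: vec_eq_iff)
qed

lemma dz_mult_sat_ge:
  assumes "0 < ub $ i" "0 < lb $ i"
  shows "min (ub $ i) (lb $ i) * \<bar>dz ub lb u $ i\<bar> \<le> dz ub lb u $ i * sat ub lb u $ i"
proof -
  consider "ub $ i < u $ i" | "u $ i < - lb $ i" | "- lb $ i \<le> u $ i" "u $ i \<le> ub $ i"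
    by linarith
  then show ?thesis
  proof cases
    case 1
    then show ?thesis
      using assms by (simp add: dz_def sat_def mult.commute mult_right_mono)
  next
    case 2
    then have "min (ub $ i) (lb $ i) * (- u $ i - lb $ i) \<le> lb $ i * (- u $ i - lb $ i)"
      by (intro mult_right_mono) auto
    with 2 assms show ?thesis
      by (simp add: dz_def sat_def algebra_simps)
  next
    case 3
    then show ?thesis by (simp add: dz_def sat_def)
  qed
qed

lemma dz_sector_sum_le_inner:
  assumes "\<forall>i. 0 < ub $ i" "\<forall>i. 0 < lb $ i" "diagonal_mat T" "psd_mat T"
  shows "(\<Sum>i\<in>UNIV. T $ i $ i * min (ub $ i) (lb $ i) * \<bar>dz ub lb u $ i\<bar>)
           \<le> dz ub lb u \<bullet> (T *v sat ub lb u)"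
  unfolding inner_diagonal_mat[OF assms(3)]
proof (rule sum_mono)
  fix i
  have "T $ i $ i * (min (ub $ i) (lb $ i) * \<bar>dz ub lb u $ i\<bar>)
          \<le> T $ i $ i * (dz ub lb u $ i * sat ub lb u $ i)"
    using assms by (intro mult_left_mono dz_mult_sat_ge psd_mat_diag_nonneg) auto
  then show "T $ i $ i * min (ub $ i) (lb $ i) * \<bar>dz ub lb u $ i\<bar>
               \<le> T $ i $ i * dz ub lb u $ i * sat ub lb u $ i"
    by (simp add: mult.assoc)
qed

section \<open>The quadratic form in the state and the deadzone\<close>

definition dz_quadratic ::
  "real^('n::finite + 'm::finite)^('n + 'm) \<Rightarrow> real^'n^'m \<Rightarrow> real^'m \<Rightarrow> real^'m
     \<Rightarrow> real^'n \<Rightarrow> real"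
  where "dz_quadratic Q K ub lb x =
    stack x (dz ub lb (K *v x)) \<bullet> (Q *v stack x (dz ub lb (K *v x)))"

lemma dz_quadratic_zero:
  assumes "\<forall>i. 0 < ub $ i" "\<forall>i. 0 < lb $ i"
  shows "dz_quadratic Q K ub lb 0 = 0"
  using dz_zero[OF assms] by (simp add: dz_quadratic_def)

lemma dz_quadratic_lower_bound:
  assumes "\<forall>i. 0 < ub $ i" "\<forall>i. 0 < lb $ i" "diagonal_mat T0" "psd_mat T0"
    and "psd_mat (Q - Sigma0 K T0 - SigmaR K R)"
  shows "2 * (\<Sum>i\<in>UNIV. T0 $ i $ i * min (ub $ i) (lb $ i) * \<bar>dz ub lb (K *v x) $ i\<bar>)
           + sat ub lb (K *v x) \<bullet> (R *v sat ub lb (K *v x))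
         \<le> dz_quadratic Q K ub lb x"
proof -
  let ?w = "dz ub lb (K *v x)" and ?s = "sat ub lb (K *v x)"
  let ?z = "stack x ?w"
  have "K *v x - ?w = ?s"
    by (simp add: dz_def)
  then have "dz_quadratic Q K ub lb x
      = ?z \<bullet> ((Q - Sigma0 K T0 - SigmaR K R) *v ?z) + 2 * (?w \<bullet> (T0 *v ?s)) + ?s \<bullet> (R *v ?s)"
    using quadratic_form_Sigma0[OF symmetric_mat_diagonal[OF assms(3)], of x ?w K]
    by (simp add: dz_quadratic_def quadratic_form_SigmaR matrix_vector_mult_diff_rdistrib
        inner_diff_right)
  moreover have "0 \<le> ?z \<bullet> ((Q - Sigma0 K T0 - SigmaR K R) *v ?z)"
    using assms(5) unfolding psd_mat_def by blast
  ultimately show ?thesis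
    using dz_sector_sum_le_inner[OF assms(1-4), of "K *v x"] by linarith
qed

lemma dz_quadratic_ge_sat_quadratic_form:
  assumes "\<forall>i. 0 < ub $ i" "\<forall>i. 0 < lb $ i" "diagonal_mat T0" "psd_mat T0"
    and "psd_mat (Q - Sigma0 K T0 - SigmaR K R)"
  shows "sat ub lb (K *v x) \<bullet> (R *v sat ub lb (K *v x)) \<le> dz_quadratic Q K ub lb x"
proof -
  have "0 \<le> (\<Sum>i\<in>UNIV. T0 $ i $ i * min (ub $ i) (lb $ i) * \<bar>dz ub lb (K *v x) $ i\<bar>)"
    using assms(1,2,4) by (intro sum_nonneg mult_nonneg_nonneg psd_mat_diag_nonneg) (auto simp: less_imp_le)
  then show ?thesis
    using dz_quadratic_lower_bound[OF assms, of x] by linarith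
qed

lemma psd_fun_dz_quadratic:
  assumes "\<forall>i. 0 < ub $ i" "\<forall>i. 0 < lb $ i" "diagonal_mat T0" "psd_mat T0" "psd_mat R"
    and "psd_mat (Q - Sigma0 K T0 - SigmaR K R)"
  shows "psd_fun (dz_quadratic Q K ub lb)"
  unfolding psd_fun_def
  using dz_quadratic_zero[OF assms(1,2)] dz_quadratic_ge_sat_quadratic_form[OF assms(1-4,6)]
    assms(5) unfolding psd_mat_def by (meson order_trans)

lemma dz_quadratic_ge_lambda_min:
  assumes "\<forall>i. 0 < ub $ i" "\<forall>i. 0 < lb $ i" "diagonal_mat T0" "psd_mat T0" "symmetric_mat R"
    and "psd_mat (Q - Sigma0 K T0 - SigmaR K R)"
  shows "lambda_min R * (norm (sat ub lb (K *v x)))\<^sup>2 \<le> dz_quadratic Q K ub lb x"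
  using lambda_min_le_quadratic_form[OF assms(5)] dz_quadratic_ge_sat_quadratic_form[OF assms(1-4,6)]
  by (rule order_trans)

lemma pd_fun_dz_quadraticI:
  fixes Q :: "real^('n::finite + 'm::finite)^('n + 'm)"
  assumes "\<forall>i. 0 < ub $ i" "\<forall>i. 0 < lb $ i" "pd_mat (blk11 Q)"
    and "\<And>x. dz ub lb (K *v x) \<noteq> 0 \<Longrightarrow> 0 < dz_quadratic Q K ub lb x"
  shows "pd_fun (dz_quadratic Q K ub lb)"
  unfolding pd_fun_def
proof (intro conjI allI impI)
  show "dz_quadratic Q K ub lb 0 = 0"
    by (rule dz_quadratic_zero[OF assms(1,2)])
next
  fix x :: "real^'n" assume "x \<noteq> 0"
  show "0 < dz_quadratic Q K ub lb x"
  proof (cases "dz ub lb (K *v x) = 0")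
    case True
    then have "dz_quadratic Q K ub lb x = x \<bullet> (blk11 Q *v x)"
      by (simp add: dz_quadratic_def quadratic_form_stack)
    with \<open>x \<noteq> 0\<close> assms(3) show ?thesis
      unfolding pd_mat_def by simp
  qed (rule assms(4))
qed

lemma pd_fun_dz_quadratic_SigmaR:
  assumes "\<forall>i. 0 < ub $ i" "\<forall>i. 0 < lb $ i" "pd_mat R" "pd_mat (blk11 Q)"
    and "psd_mat (Q - SigmaR K R)"
  shows "pd_fun (dz_quadratic Q K ub lb)"
proof (rule pd_fun_dz_quadraticI[OF assms(1,2,4)])
  fix x assume "dz ub lb (K *v x) \<noteq> 0"
  then have "K *v x \<noteq> 0"
    using dz_zero[OF assms(1,2)] by auto
  then have "sat ub lb (K *v x) \<noteq> 0"
    using sat_eq_zeroD[OF assms(1,2)] by blast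
  then have "0 < sat ub lb (K *v x) \<bullet> (R *v sat ub lb (K *v x))"
    using assms(3) unfolding pd_mat_def by blast
  also have "\<dots> \<le> dz_quadratic Q K ub lb x"
    using assms(5) by (intro dz_quadratic_ge_sat_quadratic_form[OF assms(1,2), of 0])
      (auto simp: diagonal_mat_def psd_mat_def)
  finally show "0 < dz_quadratic Q K ub lb x" .
qed

lemma cross_terms_le_of_le_mult:
  fixes a b \<delta> :: real
  assumes "0 \<le> a" "0 \<le> b" "b \<le> \<delta> * a" "0 < \<delta>" "\<delta> \<le> 1"
  shows "2 * a * b + b\<^sup>2 \<le> 3 * \<delta> * a\<^sup>2"
proof -
  have "2 * a * b \<le> 2 * a * (\<delta> * a)"
    using assms(1,3) by (intro mult_left_mono) auto
  also have "\<dots> = 2 * \<delta> * a\<^sup>2"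
    by (simp add: power2_eq_square)
  finally have "2 * a * b \<le> 2 * \<delta> * a\<^sup>2" .
  have "b\<^sup>2 \<le> (\<delta> * a)\<^sup>2"
    using assms(3,2) by (rule power_mono)
  also have "\<dots> = \<delta> * (\<delta> * a\<^sup>2)"
    by (simp add: power_mult_distrib power2_eq_square)
  also have "\<dots> \<le> \<delta> * a\<^sup>2"
    using assms(4,5) by (intro mult_left_le_one_le) auto
  finally show ?thesis
    using \<open>2 * a * b \<le> 2 * \<delta> * a\<^sup>2\<close> by linarith
qed

(* Either b <= delta a, and then the quadratic bound gives y >= alpha a^2 / 2, or b > delta a,
   and then the linear bound gives y >= c delta a. *)
lemma linear_bound_of_quadratic_and_linear_bounds:
  fixes a b y \<alpha> c C :: real
  assumes "1 \<le> a" "0 \<le> b" "0 < \<alpha>" "0 < c" "0 \<le> C"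
    and quadratic: "\<alpha> * a\<^sup>2 - C * (2 * a * b + b\<^sup>2) \<le> y"
    and linear: "c * b \<le> y"
  shows "min (\<alpha> / 2) (c * min 1 (\<alpha> / (6 * C + 1))) * a \<le> y"
proof -
  define \<delta> where "\<delta> = min 1 (\<alpha> / (6 * C + 1))"
  have "0 < \<delta>" "\<delta> \<le> 1"
    using assms by (simp_all add: \<delta>_def)
  have "0 < 6 * C + 1"
    using \<open>0 \<le> C\<close> by simp
  moreover have "\<delta> \<le> \<alpha> / (6 * C + 1)"
    by (simp add: \<delta>_def)
  ultimately have "\<delta> * (6 * C + 1) \<le> \<alpha>"
    by (simp add: pos_le_divide_eq)
  then have "6 * C * \<delta> \<le> \<alpha>"
    using \<open>0 < \<delta>\<close> by (simp add: algebra_simps)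
  show ?thesis
  proof (cases "b \<le> \<delta> * a")
    case True
    have "C * (2 * a * b + b\<^sup>2) \<le> C * (3 * \<delta> * a\<^sup>2)"
      using True assms(1,2,5) \<open>0 < \<delta>\<close> \<open>\<delta> \<le> 1\<close>
      by (intro mult_left_mono cross_terms_le_of_le_mult) auto
    also have "\<dots> = (6 * C * \<delta>) * a\<^sup>2 / 2"
      by (simp add: algebra_simps)
    also have "\<dots> \<le> \<alpha> * a\<^sup>2 / 2"
      using \<open>6 * C * \<delta> \<le> \<alpha>\<close> by (intro divide_right_mono mult_right_mono) auto
    finally have "\<alpha> * a\<^sup>2 / 2 \<le> y"
      using quadratic by linarith
    moreover have "a \<le> a\<^sup>2"
      using mult_left_mono[OF \<open>1 \<le> a\<close>, of a] \<open>1 \<le> a\<close> by (simp add: power2_eq_square)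
    then have "(\<alpha> / 2) * a \<le> (\<alpha> / 2) * a\<^sup>2"
      using \<open>0 < \<alpha>\<close> by (intro mult_left_mono) auto
    ultimately have "(\<alpha> / 2) * a \<le> y"
      by linarith
    moreover have "min (\<alpha> / 2) (c * \<delta>) * a \<le> (\<alpha> / 2) * a"
      using \<open>1 \<le> a\<close> by (intro mult_right_mono) auto
    ultimately show ?thesis
      by (simp add: \<delta>_def)
  next
    case False
    have "min (\<alpha> / 2) (c * \<delta>) * a \<le> c * (\<delta> * a)"
      using \<open>1 \<le> a\<close> by (simp add: mult_right_mono flip: mult.assoc)
    also have "\<dots> \<le> c * b"
      using False \<open>0 < c\<close> by (intro mult_left_mono) auto
    finally show ?thesis
      using linear by (simp add: \<delta>_def)
  qed
qed

lemma radially_unboundedI: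
  fixes Y :: "real^'n \<Rightarrow> real" and w :: "real^'n \<Rightarrow> 'b::real_normed_vector"
  assumes "0 < \<alpha>" "0 < c" "0 \<le> C"
    and quadratic:
      "\<And>x. \<alpha> * (norm x)\<^sup>2 - C * (2 * norm x * norm (w x) + (norm (w x))\<^sup>2) \<le> Y x"
    and linear: "\<And>x. c * norm (w x) \<le> Y x"
  shows "radially_unbounded Y"
proof -
  define e where "e = min (\<alpha> / 2) (c * min 1 (\<alpha> / (6 * C + 1)))"
  have "0 < e"
    using assms(1-3) by (simp add: e_def)
  have "filterlim (\<lambda>x. e * norm x) at_top at_infinity"
    by (rule filterlim_tendsto_pos_mult_at_top[OF tendsto_const \<open>0 < e\<close> filterlim_norm_at_top])
  moreover have "eventually (\<lambda>x. e * norm x \<le> Y x) at_infinity"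
    unfolding eventually_at_infinity e_def
    using linear_bound_of_quadratic_and_linear_bounds[OF _ _ assms(1-3) quadratic linear] by auto
  ultimately show ?thesis
    unfolding radially_unbounded_def by (rule filterlim_at_top_mono)
qed

lemma dz_quadratic_ge_norm_dz:
  assumes "\<forall>i. 0 < ub $ i" "\<forall>i. 0 < lb $ i" "diagonal_mat T0" "pd_mat T0"
    and "psd_mat (Q - Sigma0 K T0)"
  obtains c where "0 < c" "\<And>x. c * norm (dz ub lb (K *v x)) \<le> dz_quadratic Q K ub lb x"
proof -
  define c where "c = Min (range (\<lambda>i. 2 * (T0 $ i $ i * min (ub $ i) (lb $ i))))"
  have "0 < c"
    using assms(1,2) pd_mat_diag_pos[OF assms(4)] by (simp add: c_def)
  have "c * norm (dz ub lb (K *v x)) \<le> dz_quadratic Q K ub lb x" for x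
  proof -
    let ?w = "dz ub lb (K *v x)"
    have "c * norm ?w \<le> c * (\<Sum>i\<in>UNIV. \<bar>?w $ i\<bar>)"
      using \<open>0 < c\<close> norm_le_l1_cart by (simp add: mult_left_mono)
    also have "\<dots> \<le> (\<Sum>i\<in>UNIV. 2 * (T0 $ i $ i * min (ub $ i) (lb $ i)) * \<bar>?w $ i\<bar>)"
      unfolding sum_distrib_left by (intro sum_mono mult_right_mono) (auto simp: c_def)
    also have "\<dots> \<le> dz_quadratic Q K ub lb x"
      using dz_quadratic_lower_bound[OF assms(1-3) pd_mat_imp_psd_mat[OF assms(4)], of Q K 0 x] assms(5)
      by (simp add: sum_distrib_left mult.assoc)
    finally show ?thesis .
  qed
  with \<open>0 < c\<close> show thesis by (rule that)
qed

lemma pd_fun_dz_quadratic_Sigma0: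
  assumes "\<forall>i. 0 < ub $ i" "\<forall>i. 0 < lb $ i" "diagonal_mat T0" "pd_mat T0" "pd_mat (blk11 Q)"
    and "psd_mat (Q - Sigma0 K T0)"
  shows "pd_fun (dz_quadratic Q K ub lb)"
proof -
  obtain c where "0 < c" and c: "\<And>x. c * norm (dz ub lb (K *v x)) \<le> dz_quadratic Q K ub lb x"
    using dz_quadratic_ge_norm_dz[OF assms(1-4,6)] by blast
  show ?thesis
    using \<open>0 < c\<close> by (intro pd_fun_dz_quadraticI[OF assms(1,2,5)] order.strict_trans2[OF _ c]) simp
qed

lemma radially_unbounded_dz_quadratic:
  assumes "\<forall>i. 0 < ub $ i" "\<forall>i. 0 < lb $ i" "diagonal_mat T0" "pd_mat T0" "pd_mat (blk11 Q)"
    and "psd_mat (Q - Sigma0 K T0)"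
  shows "radially_unbounded (dz_quadratic Q K ub lb)"
proof -
  obtain c where "0 < c" and linear: "\<And>x. c * norm (dz ub lb (K *v x)) \<le> dz_quadratic Q K ub lb x"
    using dz_quadratic_ge_norm_dz[OF assms(1-4,6)] by blast
  obtain \<alpha> C where "0 < \<alpha>" "0 \<le> C" and quadratic:
    "\<And>x w. \<alpha> * (norm x)\<^sup>2 - C * (2 * norm x * norm w + (norm w)\<^sup>2)
       \<le> stack x w \<bullet> (Q *v stack x w)"
    using quadratic_form_stack_lower_bound[OF assms(5)] by blast
  show ?thesis
  proof (rule radially_unboundedI[OF \<open>0 < \<alpha>\<close> \<open>0 < c\<close> \<open>0 \<le> C\<close>])
    fix x
    let ?w = "dz ub lb (K *v x)"
    show "\<alpha> * (norm x)\<^sup>2 - C * (2 * norm x * norm ?w + (norm ?w)\<^sup>2) \<le> dz_quadratic Q K ub lb x"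
      unfolding dz_quadratic_def by (rule quadratic)
  qed (rule linear)
qed

theorem theorem1:
  fixes K :: "real^'n^'m"
    and Q :: "real^('n + 'm)^('n + 'm)"
    and ub lb :: "real^'m"
    and Y :: "real^'n \<Rightarrow> real"
  assumes ub_pos: "\<forall>i. ub $ i > 0"
    and lb_pos: "\<forall>i. lb $ i > 0"
    and Q_sym: "symmetric_mat Q"
    and Y_def: "\<forall>x. Y x = stack x (dz ub lb (K *v x)) \<bullet> (Q *v stack x (dz ub lb (K *v x)))"
  shows
    "((\<forall>T0 R. diagonal_mat T0 \<and> psd_mat T0 \<and> symmetric_mat R \<and> psd_mat R
          \<and> psd_mat (Q - Sigma0 K T0 - SigmaR K R)
        \<longrightarrow> psd_fun Y))
   \<and> ((\<forall>T0 R. diagonal_mat T0 \<and> psd_mat T0 \<and> symmetric_mat R \<and> pd_mat R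
          \<and> psd_mat (Q - Sigma0 K T0 - SigmaR K R)
        \<longrightarrow> psd_fun Y \<and> (\<forall>x. Y x \<ge> lambda_min R * (norm (sat ub lb (K *v x)))^2)))
   \<and> ((\<forall>R. symmetric_mat R \<and> pd_mat R \<and> pd_mat (blk11 Q) \<and> psd_mat (Q - SigmaR K R)
        \<longrightarrow> pd_fun Y))
   \<and> ((\<forall>T0. diagonal_mat T0 \<and> pd_mat T0 \<and> pd_mat (blk11 Q) \<and> psd_mat (Q - Sigma0 K T0)
        \<longrightarrow> pd_fun Y \<and> radially_unbounded Y))"
proof -
  have Y: "Y = dz_quadratic Q K ub lb"
    using Y_def by (simp add: fun_eq_iff dz_quadratic_def)
  note limits = ub_pos lb_pos
  show ?thesis
    unfolding Y
    by (auto intro: psd_fun_dz_quadratic[OF limits] pd_mat_imp_psd_mat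
        dz_quadratic_ge_lambda_min[OF limits] pd_fun_dz_quadratic_SigmaR[OF limits]
        pd_fun_dz_quadratic_Sigma0[OF limits] radially_unbounded_dz_quadratic[OF limits])
qed

end
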